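(* Let $(X,\sigma,T)$ be as in the context, $x\in eX$, $\xi\in X_{eq}$ and $f_1,f_2\in L$. (1) If $\xi$ is regular, then $(f_1,f_2)\in R^{\xi-\pi_{eq}(x)}_{\mathrm{ev}_x}$ if and only if $(ef_1)^{-1}f_2\in\mathrm{stab}_{\mathcal G}(x)$ and $\tilde\pi_{eq}(f_1)=\tilde\pi_{eq}(f_2)=\xi-\pi_{eq}(x)$. (2) If every point of $\pi_{eq}^{-1}(\xi)$ separates the idempotents of $L$, then $(f_1,f_2)\in R^{\xi-\pi_{eq}(x)}_{\mathrm{ev}_x}$ if and only if $(ef_1)^{-1}f_2\in\mathrm{stab}_{\mathcal G}(x)$, $f_1^0=f_2^0$ and $\tilde\pi_{eq}(f_1)=\tilde\pi_{eq}(f_2)=\xi-\pi_{eq}(x)$.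
   Context: $T$ abelian group acting continuously, minimally and non-distally by $\sigma$ on a compact Hausdorff space $X$. $E(X)$: Ellis semigroup (closure of $\{\sigma^t\}$ in $X^X$). $\pi_{eq}:X\to X_{eq}$: maximal equicontinuous factor ($X_{eq}$ a compact abelian group). Points $x,y$ are proximal if $f(x)=f(y)$ for some $f\in E(X)$; $\xi\in X_{eq}$ is singular if $\pi_{eq}^{-1}(\xi)$ contains two distinct proximal points, regular otherwise. Fix a minimal idempotent $e$, $L=E(X)e$, $\mathcal G=eL$ (a group with identity $e$; $g^{-1}$ denotes the group inverse), $\mathrm{stab}_{\mathcal G}(x)=\{g\in\mathcal G: g(x)=x\}$. For $f\in L$, $f^{-1}$ is its unique normal inverse in the completely simple semigroup $L$ and $f^0=f^{-1}f$. A point separates the idempotents of $L$ if evaluation at it is injective on the set of idempotents of $L$. $\tilde\pi_{eq}(f)=\pi_{eq}(f(y))-\pi_{eq}(y)$ (independent of $y$). $R^\zeta_{\mathrm{ev}_x}=\{(f_1,f_2)\in L\times L: f_1(x)=f_2(x),\ \tilde\pi_{eq}(f_i)=\zeta,\ i=1,2\}$. *)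

theory Defs
  imports "HOL-Analysis.Analysis"
begin

text \<open>Setting: an abelian group 't acts on the compact Hausdorff space of type 'x
by the maps sigma t (composition is the semigroup product: f g = f o g).
The space of maps 'x => 'x carries the product (pointwise) topology
(instance from Function_Topology).\<close>

definition is_action :: "('t::ab_group_add \<Rightarrow> 'x::topological_space \<Rightarrow> 'x) \<Rightarrow> bool" where
  "is_action \<sigma> \<longleftrightarrow> \<sigma> 0 = id \<and> (\<forall>s t. \<sigma> (s + t) = \<sigma> s \<circ> \<sigma> t)
     \<and> (\<forall>t. continuous_on UNIV (\<sigma> t))"

definition ellis :: "('t \<Rightarrow> 'x::topological_space \<Rightarrow> 'x) \<Rightarrow> ('x \<Rightarrow> 'x) set" where
  "ellis \<sigma> = closure (range \<sigma>)"

definition minimal_action :: "('t \<Rightarrow> 'x::topological_space \<Rightarrow> 'x) \<Rightarrow> bool" where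
  "minimal_action \<sigma> \<longleftrightarrow> (\<forall>x. closure (range (\<lambda>t. \<sigma> t x)) = UNIV)"

definition proximal :: "('t \<Rightarrow> 'x::topological_space \<Rightarrow> 'x) \<Rightarrow> 'x \<Rightarrow> 'x \<Rightarrow> bool" where
  "proximal \<sigma> x y \<longleftrightarrow> (\<exists>f\<in>ellis \<sigma>. f x = f y)"

definition distal_action :: "('t \<Rightarrow> 'x::topological_space \<Rightarrow> 'x) \<Rightarrow> bool" where
  "distal_action \<sigma> \<longleftrightarrow> (\<forall>x y. proximal \<sigma> x y \<longrightarrow> x = y)"

text \<open>Factors of X correspond to closed invariant equivalence relations R on X
(the factor being X/R).  The open neighbourhoods of the diagonal of the compact
Hausdorff space X/R (i.e. the open entourages of its unique uniformity) are exactly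
the images of the open R-saturated subsets of X \<times> X containing R.  Hence the
induced action on X/R is equicontinuous iff the following holds.\<close>

definition closed_inv_equiv :: "('t \<Rightarrow> 'x::topological_space \<Rightarrow> 'x) \<Rightarrow> ('x \<times> 'x) set \<Rightarrow> bool" where
  "closed_inv_equiv \<sigma> R \<longleftrightarrow> equiv UNIV R \<and> closed R \<and>
     (\<forall>t x y. (x, y) \<in> R \<longrightarrow> (\<sigma> t x, \<sigma> t y) \<in> R)"

definition sat_nbhd :: "('x::topological_space \<times> 'x) set \<Rightarrow> ('x \<times> 'x) set \<Rightarrow> bool" where
  "sat_nbhd R W \<longleftrightarrow> open W \<and> R \<subseteq> W \<and>
     (\<forall>a b a' b'. (a, b) \<in> W \<longrightarrow> (a, a') \<in> R \<longrightarrow> (b, b') \<in> R \<longrightarrow> (a', b') \<in> W)"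

definition equicontinuous_factor_rel :: "('t \<Rightarrow> 'x::topological_space \<Rightarrow> 'x) \<Rightarrow> ('x \<times> 'x) set \<Rightarrow> bool" where
  "equicontinuous_factor_rel \<sigma> R \<longleftrightarrow> closed_inv_equiv \<sigma> R \<and>
     (\<forall>W. sat_nbhd R W \<longrightarrow> (\<exists>W'. sat_nbhd R W' \<and>
        (\<forall>t a b. (a, b) \<in> W' \<longrightarrow> (\<sigma> t a, \<sigma> t b) \<in> W)))"

text \<open>pi is the maximal equicontinuous factor map onto the compact (Hausdorff) abelian
group 'g, on which T acts by rotations: pi is a continuous equivariant surjection,
and its fibre relation is contained in the relation of every equicontinuous factor
(i.e. every equicontinuous factor factors through pi).\<close>
definition is_MEF :: "('t \<Rightarrow> 'x::topological_space \<Rightarrow> 'x) \<Rightarrow> ('x \<Rightarrow> 'g::{topological_ab_group_add, t2_space}) \<Rightarrow> bool" where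
  "is_MEF \<sigma> \<pi> \<longleftrightarrow> compact (UNIV :: 'g set) \<and> continuous_on UNIV \<pi> \<and> surj \<pi> \<and>
     (\<exists>\<alpha> :: 't \<Rightarrow> 'g. \<forall>t x. \<pi> (\<sigma> t x) = \<pi> x + \<alpha> t) \<and>
     (\<forall>R. equicontinuous_factor_rel \<sigma> R \<longrightarrow> {(x, y). \<pi> x = \<pi> y} \<subseteq> R)"

definition singular_pt :: "('t \<Rightarrow> 'x::topological_space \<Rightarrow> 'x) \<Rightarrow> ('x \<Rightarrow> 'g) \<Rightarrow> 'g \<Rightarrow> bool" where
  "singular_pt \<sigma> \<pi> \<xi> \<longleftrightarrow> (\<exists>y z. \<pi> y = \<xi> \<and> \<pi> z = \<xi> \<and> y \<noteq> z \<and> proximal \<sigma> y z)"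

definition regular_pt :: "('t \<Rightarrow> 'x::topological_space \<Rightarrow> 'x) \<Rightarrow> ('x \<Rightarrow> 'g) \<Rightarrow> 'g \<Rightarrow> bool" where
  "regular_pt \<sigma> \<pi> \<xi> \<longleftrightarrow> \<not> singular_pt \<sigma> \<pi> \<xi>"

text \<open>pi-tilde(f) = pi(f y) - pi(y); by assumption of the paper independent of y,
so we evaluate at an arbitrary fixed point.\<close>
definition pi_tilde :: "('x \<Rightarrow> 'g::ab_group_add) \<Rightarrow> ('x \<Rightarrow> 'x) \<Rightarrow> 'g" where
  "pi_tilde \<pi> f = \<pi> (f undefined) - \<pi> undefined"

definition left_ideal :: "('x \<Rightarrow> 'x) set \<Rightarrow> ('x \<Rightarrow> 'x) set \<Rightarrow> bool" where
  "left_ideal E I \<longleftrightarrow> I \<noteq> {} \<and> I \<subseteq> E \<and> (\<forall>f\<in>E. \<forall>g\<in>I. f \<circ> g \<in> I)"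

definition minimal_left_ideal :: "('x \<Rightarrow> 'x) set \<Rightarrow> ('x \<Rightarrow> 'x) set \<Rightarrow> bool" where
  "minimal_left_ideal E I \<longleftrightarrow> left_ideal E I \<and> (\<forall>J. left_ideal E J \<longrightarrow> J \<subseteq> I \<longrightarrow> J = I)"

definition minimal_idempotent :: "('x \<Rightarrow> 'x) set \<Rightarrow> ('x \<Rightarrow> 'x) \<Rightarrow> bool" where
  "minimal_idempotent E e \<longleftrightarrow> e \<circ> e = e \<and> (\<exists>I. minimal_left_ideal E I \<and> e \<in> I)"

definition Lset :: "('x \<Rightarrow> 'x) set \<Rightarrow> ('x \<Rightarrow> 'x) \<Rightarrow> ('x \<Rightarrow> 'x) set" where
  "Lset E e = (\<lambda>f. f \<circ> e) ` E"

definition Gset :: "('x \<Rightarrow> 'x) set \<Rightarrow> ('x \<Rightarrow> 'x) \<Rightarrow> ('x \<Rightarrow> 'x) set" where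
  "Gset E e = (\<lambda>f. e \<circ> f) ` Lset E e"

definition Ginv :: "('x \<Rightarrow> 'x) set \<Rightarrow> ('x \<Rightarrow> 'x) \<Rightarrow> ('x \<Rightarrow> 'x) \<Rightarrow> ('x \<Rightarrow> 'x)" where
  "Ginv E e g = (THE h. h \<in> Gset E e \<and> g \<circ> h = e \<and> h \<circ> g = e)"

text \<open>Unique normal inverse of f in the completely simple semigroup L,
and f^0 = f^-1 f.\<close>
definition Linv :: "('x \<Rightarrow> 'x) set \<Rightarrow> ('x \<Rightarrow> 'x) \<Rightarrow> ('x \<Rightarrow> 'x)" where
  "Linv L f = (THE h. h \<in> L \<and> f \<circ> h \<circ> f = f \<and> h \<circ> f \<circ> h = h \<and> f \<circ> h = h \<circ> f)"

definition Lzero :: "('x \<Rightarrow> 'x) set \<Rightarrow> ('x \<Rightarrow> 'x) \<Rightarrow> ('x \<Rightarrow> 'x)" where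
  "Lzero L f = Linv L f \<circ> f"

definition stabG :: "('x \<Rightarrow> 'x) set \<Rightarrow> ('x \<Rightarrow> 'x) \<Rightarrow> 'x \<Rightarrow> ('x \<Rightarrow> 'x) set" where
  "stabG E e x = {g \<in> Gset E e. g x = x}"

definition separates_idempotents :: "('x \<Rightarrow> 'x) set \<Rightarrow> 'x \<Rightarrow> bool" where
  "separates_idempotents L y \<longleftrightarrow> inj_on (\<lambda>u. u y) {u \<in> L. u \<circ> u = u}"

definition Rev :: "('x \<Rightarrow> 'g::ab_group_add) \<Rightarrow> ('x \<Rightarrow> 'x) set \<Rightarrow> 'g \<Rightarrow> 'x
                   \<Rightarrow> (('x \<Rightarrow> 'x) \<times> ('x \<Rightarrow> 'x)) set" where
  "Rev \<pi> L \<zeta> x = {(f1, f2). f1 \<in> L \<and> f2 \<in> L \<and> f1 x = f2 x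
                      \<and> pi_tilde \<pi> f1 = \<zeta> \<and> pi_tilde \<pi> f2 = \<zeta>}"

end

theory Submission
  imports Defs
begin

text \<open>Let g be the group inverse of e f1 in G, so that g f1 = e and e f1 g = e.  As e x = x,
the element g f2 of G fixes x exactly when e (f1 x) = e (f2 x): the stabiliser condition
identifies f1 x and f2 x only up to the idempotent e, and each part of the theorem supplies
the missing information.  Over a regular fibre e fixes every point, because e y and y are
proximal and lie in the same fibre (an idempotent has pi_tilde 0).  In the second part,
f^0 is an idempotent of L with f^0 e f = f, so f1^0 = f2^0 recovers f1 x from e (f1 x);
conversely f1^0 and f2^0 both fix the common point f1 x = f2 x, which separates idempotents.\<close>

lemma continuous_on_comp_right:
  "continuous_on UNIV (\<lambda>f::'a \<Rightarrow> 'b::topological_space. f \<circ> g)"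
  by (rule continuous_on_coordinatewise_then_product) (simp add: o_def)

lemma continuous_on_comp_left:
  fixes h :: "'b::topological_space \<Rightarrow> 'c::topological_space"
  assumes "continuous_on UNIV h"
  shows "continuous_on UNIV (\<lambda>f::'a \<Rightarrow> 'b. h \<circ> f)"
proof (rule continuous_on_coordinatewise_then_product)
  fix i
  show "continuous_on UNIV (\<lambda>f::'a \<Rightarrow> 'b. (h \<circ> f) i)"
    using continuous_on_compose2[OF assms continuous_on_product_coordinates[of i]]
    by (simp add: o_def)
qed

lemma ellis_image_subset:
  assumes "continuous_on UNIV \<phi>" and "\<phi> ` range \<sigma> \<subseteq> ellis \<sigma>"
  shows "\<phi> ` ellis \<sigma> \<subseteq> ellis \<sigma>"
  using image_closure_subset[of "range \<sigma>" \<phi> "ellis \<sigma>"] assms continuous_on_subset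
  unfolding ellis_def by blast

lemma action_comp_in_ellis:
  assumes "is_action \<sigma>" and "f \<in> ellis \<sigma>"
  shows "\<sigma> t \<circ> f \<in> ellis \<sigma>"
proof -
  have "continuous_on UNIV (\<sigma> t)" and "\<And>s. \<sigma> t \<circ> \<sigma> s = \<sigma> (t + s)"
    using assms(1) unfolding is_action_def by auto
  then have "(\<lambda>f. \<sigma> t \<circ> f) ` ellis \<sigma> \<subseteq> ellis \<sigma>"
    by (intro ellis_image_subset continuous_on_comp_left) (auto simp: ellis_def closure_subset[THEN subsetD])
  then show ?thesis using assms(2) by blast
qed

lemma ellis_comp_closed:
  assumes "is_action \<sigma>" and "f \<in> ellis \<sigma>" and "g \<in> ellis \<sigma>"
  shows "f \<circ> g \<in> ellis \<sigma>"
proof -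
  have "(\<lambda>f. f \<circ> g) ` ellis \<sigma> \<subseteq> ellis \<sigma>"
    using action_comp_in_ellis[OF assms(1,3)]
    by (intro ellis_image_subset continuous_on_comp_right) auto
  then show ?thesis using assms(2) by blast
qed

lemma pi_apply_ellis:
  fixes \<pi> :: "'x::topological_space \<Rightarrow> 'g::{topological_ab_group_add, t2_space}"
  assumes "is_MEF \<sigma> \<pi>" and "f \<in> ellis \<sigma>"
  shows "\<pi> (f y) = \<pi> y + pi_tilde \<pi> f"
proof -
  obtain \<alpha> where \<alpha>: "\<And>t x. \<pi> (\<sigma> t x) = \<pi> x + \<alpha> t"
    using assms(1) unfolding is_MEF_def by blast
  have "continuous_on UNIV \<pi>" using assms(1) unfolding is_MEF_def by blast
  define F where "F = (\<lambda>f::'x \<Rightarrow> 'x. (\<pi> (f y) - \<pi> y) - pi_tilde \<pi> f)"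
  have "continuous_on UNIV F"
    unfolding F_def pi_tilde_def
    by (intro continuous_intros continuous_on_compose2[OF \<open>continuous_on UNIV \<pi>\<close>
          continuous_on_product_coordinates]) auto
  moreover have "F h = 0" if "h \<in> range \<sigma>" for h
    using that \<alpha> unfolding F_def pi_tilde_def by auto
  ultimately have "F f = 0"
    using continuous_constant_on_closure[of "range \<sigma>" F] continuous_on_subset assms(2)
    unfolding ellis_def by blast
  then show ?thesis unfolding F_def by (simp add: algebra_simps)
qed

lemma pi_tilde_idempotent:
  fixes \<pi> :: "'x::topological_space \<Rightarrow> 'g::{topological_ab_group_add, t2_space}"
  assumes "is_MEF \<sigma> \<pi>" and "u \<in> ellis \<sigma>" and "u \<circ> u = u"
  shows "pi_tilde \<pi> u = 0"
proof -
  have "\<pi> (u y) = \<pi> (u (u y))" for y using assms(3) by (metis comp_apply)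
  then show ?thesis using pi_apply_ellis[OF assms(1,2)] by (metis add_cancel_left_right)
qed

lemma idempotent_fixes_regular_fibre:
  fixes \<pi> :: "'x::topological_space \<Rightarrow> 'g::{topological_ab_group_add, t2_space}"
  assumes "is_MEF \<sigma> \<pi>" and "u \<in> ellis \<sigma>" and "u \<circ> u = u"
    and "regular_pt \<sigma> \<pi> (\<pi> y)"
  shows "u y = y"
proof (rule ccontr)
  assume "u y \<noteq> y"
  moreover have "\<pi> (u y) = \<pi> y"
    using pi_apply_ellis[OF assms(1,2)] pi_tilde_idempotent[OF assms(1-3)] by simp
  moreover have "proximal \<sigma> (u y) y"
    unfolding proximal_def using assms(2,3) by (metis comp_apply)
  ultimately show False
    using assms(4) unfolding regular_pt_def singular_pt_def by blast
qed

lemma commuting_inverse_unique: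
  assumes "f \<circ> h \<circ> f = f" "h \<circ> f \<circ> h = h" "f \<circ> h = h \<circ> f"
    and "f \<circ> k \<circ> f = f" "k \<circ> f \<circ> k = k" "f \<circ> k = k \<circ> f"
  shows "h = k"
proof -
  have "f \<circ> h = (f \<circ> k) \<circ> (f \<circ> h)" using assms(4) by (metis comp_assoc)
  also have "\<dots> = (k \<circ> f) \<circ> (h \<circ> f)" using assms(3,6) by simp
  also have "\<dots> = k \<circ> (f \<circ> h \<circ> f)" by (simp add: comp_assoc)
  also have "\<dots> = f \<circ> k" using assms(1,6) by simp
  finally have fh_fk: "f \<circ> h = f \<circ> k" .
  have "h = (h \<circ> f) \<circ> h" using assms(2) by (simp add: comp_assoc)
  also have "\<dots> = k \<circ> (f \<circ> h)" using fh_fk assms(3,6) by (simp add: comp_assoc)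
  also have "\<dots> = k" using fh_fk assms(5) by (simp add: comp_assoc)
  finally show ?thesis .
qed

locale minimal_idempotent_semigroup =
  fixes E :: "('x \<Rightarrow> 'x) set" and e :: "'x \<Rightarrow> 'x"
  assumes comp_closed: "\<And>f g. f \<in> E \<Longrightarrow> g \<in> E \<Longrightarrow> f \<circ> g \<in> E"
    and e_minimal: "minimal_idempotent E e"
begin

abbreviation "L \<equiv> Lset E e"
abbreviation "G \<equiv> Gset E e"

lemma e_idem: "e \<circ> e = e"
  using e_minimal unfolding minimal_idempotent_def by blast

lemma e_in_E: "e \<in> E"
  using e_minimal unfolding minimal_idempotent_def minimal_left_ideal_def left_ideal_def by blast

lemma e_fixes_range: "y \<in> range e \<Longrightarrow> e y = y"
  using e_idem by (metis comp_apply rangeE)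

lemma L_subset_E: "f \<in> L \<Longrightarrow> f \<in> E"
  unfolding Lset_def using comp_closed e_in_E by auto

lemma L_comp_e: "f \<in> L \<Longrightarrow> f \<circ> e = f"
  unfolding Lset_def using e_idem by (auto simp: comp_assoc)

lemma comp_in_L: "k \<in> E \<Longrightarrow> f \<in> L \<Longrightarrow> k \<circ> f \<in> L"
  unfolding Lset_def using comp_closed by (auto simp: comp_assoc[symmetric])

lemma e_in_L: "e \<in> L"
  unfolding Lset_def using e_idem e_in_E by (metis image_eqI)

lemma L_comp_closed: "f \<in> L \<Longrightarrow> g \<in> L \<Longrightarrow> f \<circ> g \<in> L"
  using comp_in_L L_subset_E by blast

lemma L_minimal_left_ideal: "minimal_left_ideal E L"
proof -
  obtain I where I: "minimal_left_ideal E I" "e \<in> I"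
    using e_minimal unfolding minimal_idempotent_def by blast
  have "left_ideal E L"
    unfolding left_ideal_def using e_in_L L_subset_E comp_in_L by blast
  moreover have "L \<subseteq> I"
    using I unfolding minimal_left_ideal_def left_ideal_def Lset_def by auto
  ultimately show ?thesis using I unfolding minimal_left_ideal_def by metis
qed

lemma G_subset_L: "g \<in> G \<Longrightarrow> g \<in> L"
  unfolding Gset_def using comp_in_L e_in_E by auto

lemma e_comp_G: "g \<in> G \<Longrightarrow> e \<circ> g = g"
  unfolding Gset_def using e_idem by (auto simp: comp_assoc[symmetric])

lemma G_comp_e: "g \<in> G \<Longrightarrow> g \<circ> e = g"
  using G_subset_L L_comp_e by blast

lemma e_comp_L_in_G: "f \<in> L \<Longrightarrow> e \<circ> f \<in> G"
  unfolding Gset_def by auto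

lemma G_comp_L_in_G: "g \<in> G \<Longrightarrow> f \<in> L \<Longrightarrow> g \<circ> f \<in> G"
  unfolding Gset_def using L_comp_closed by (auto simp: comp_assoc)

text \<open>L g is a left ideal inside the minimal left ideal L, hence equal to it and contains e.\<close>

lemma G_left_inverse:
  assumes "g \<in> G"
  shows "\<exists>h\<in>G. h \<circ> g = e"
proof -
  have gL: "g \<in> L" using G_subset_L assms .
  have "k \<circ> (l \<circ> g) \<in> (\<lambda>l. l \<circ> g) ` L" if "k \<in> E" "l \<in> L" for k l
    using comp_in_L[OF that] by (metis comp_assoc image_eqI)
  then have "left_ideal E ((\<lambda>l. l \<circ> g) ` L)"
    unfolding left_ideal_def using e_in_L L_comp_closed[OF _ gL] L_subset_E by auto
  moreover have "(\<lambda>l. l \<circ> g) ` L \<subseteq> L" using L_comp_closed gL by auto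
  ultimately have "(\<lambda>l. l \<circ> g) ` L = L"
    using L_minimal_left_ideal unfolding minimal_left_ideal_def by blast
  then obtain l where l: "l \<in> L" "l \<circ> g = e" using e_in_L by (metis imageE)
  have "(e \<circ> l) \<circ> g = e" using l(2) e_idem by (simp add: comp_assoc)
  then show ?thesis using e_comp_L_in_G[OF l(1)] by blast
qed

lemma G_inverse:
  assumes "g \<in> G"
  shows "\<exists>h\<in>G. g \<circ> h = e \<and> h \<circ> g = e"
proof -
  obtain h where h: "h \<in> G" "h \<circ> g = e" using G_left_inverse assms by blast
  obtain k where k: "k \<in> G" "k \<circ> h = e" using G_left_inverse h(1) by blast
  have "g \<circ> h = (k \<circ> h) \<circ> g \<circ> h" using e_comp_G G_comp_L_in_G G_subset_L assms h(1) k(2)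
    by (metis comp_assoc)
  also have "\<dots> = k \<circ> h" using h(2) e_comp_G[OF h(1)] by (simp add: comp_assoc)
  finally show ?thesis using h k(2) by auto
qed

lemma Ginv_group_inverse:
  assumes "g \<in> G"
  shows "Ginv E e g \<in> G" "g \<circ> Ginv E e g = e" "Ginv E e g \<circ> g = e"
proof -
  obtain h where h: "h \<in> G" "g \<circ> h = e" "h \<circ> g = e" using G_inverse assms by blast
  have "h' = h" if "h' \<in> G" "h' \<circ> g = e" for h'
  proof -
    have "h' = h' \<circ> g \<circ> h" using G_comp_e[OF that(1)] h(2) by (simp add: comp_assoc)
    then show ?thesis using that(2) e_comp_G[OF h(1)] by simp
  qed
  then have "Ginv E e g = h"
    unfolding Ginv_def using h by blast
  then show "Ginv E e g \<in> G" "g \<circ> Ginv E e g = e" "Ginv E e g \<circ> g = e" using h by auto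
qed

text \<open>The normal inverse of f is f g g, where g is the group inverse of e f.\<close>

lemma Linv_normal_inverse:
  assumes "f \<in> L"
  shows "Linv L f \<in> L" "f \<circ> Linv L f \<circ> f = f" "Linv L f \<circ> f \<circ> Linv L f = Linv L f"
    "f \<circ> Linv L f = Linv L f \<circ> f"
proof -
  define g where "g = Ginv E e (e \<circ> f)"
  have g: "g \<in> G" "e \<circ> f \<circ> g = e" "g \<circ> e \<circ> f = e"
    using Ginv_group_inverse[OF e_comp_L_in_G[OF assms]] unfolding g_def by (auto simp: comp_assoc)
  have fe: "f \<circ> e = f" using L_comp_e assms .
  have gf: "g \<circ> f = e" using g(3) G_comp_e[OF g(1)] by simp
  define h where "h = f \<circ> g \<circ> g"
  have hf: "h \<circ> f = f \<circ> g" unfolding h_def using gf G_comp_e[OF g(1)] by (simp add: comp_assoc)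
  have "f \<circ> h = f \<circ> (e \<circ> f \<circ> g) \<circ> g"
    unfolding h_def using fe by (simp add: comp_assoc[symmetric])
  also have "\<dots> = f \<circ> g" using g(2) fe by simp
  finally have fh: "f \<circ> h = f \<circ> g" .
  have h: "h \<in> L \<and> f \<circ> h \<circ> f = f \<and> h \<circ> f \<circ> h = h \<and> f \<circ> h = h \<circ> f"
  proof (intro conjI)
    show "h \<in> L" unfolding h_def using L_comp_closed assms G_subset_L g(1) by metis
    show "f \<circ> h \<circ> f = f" using fh gf fe by (simp add: comp_assoc)
    have "h \<circ> f \<circ> h = f \<circ> (g \<circ> f) \<circ> g \<circ> g" using hf unfolding h_def by (metis comp_assoc)
    then show "h \<circ> f \<circ> h = h" using gf fe unfolding h_def by (simp add: comp_assoc)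
    show "f \<circ> h = h \<circ> f" using fh hf by simp
  qed
  then have "Linv L f = h"
    unfolding Linv_def using commuting_inverse_unique by blast
  then show "Linv L f \<in> L" "f \<circ> Linv L f \<circ> f = f" "Linv L f \<circ> f \<circ> Linv L f = Linv L f"
    "f \<circ> Linv L f = Linv L f \<circ> f" using h by auto
qed

lemma
  assumes "f \<in> L"
  shows Lzero_in_L: "Lzero L f \<in> L"
    and Lzero_idem: "Lzero L f \<circ> Lzero L f = Lzero L f"
    and Lzero_comp: "Lzero L f \<circ> f = f"
proof -
  note Linv = Linv_normal_inverse[OF assms]
  show "Lzero L f \<in> L" unfolding Lzero_def using L_comp_closed Linv(1) assms by blast
  show "Lzero L f \<circ> Lzero L f = Lzero L f"
    unfolding Lzero_def using Linv(3) by (metis comp_assoc)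
  show "Lzero L f \<circ> f = f"
    unfolding Lzero_def using Linv(2,4) by (metis comp_assoc)
qed

lemma Ginv_comp_in_stabG_iff:
  assumes "f1 \<in> L" and "f2 \<in> L" and "e x = x"
  shows "Ginv E e (e \<circ> f1) \<circ> f2 \<in> stabG E e x \<longleftrightarrow> e (f1 x) = e (f2 x)"
proof -
  define g where "g = Ginv E e (e \<circ> f1)"
  have g: "g \<in> G" "e \<circ> f1 \<circ> g = e" "g \<circ> e \<circ> f1 = e"
    using Ginv_group_inverse[OF e_comp_L_in_G[OF assms(1)]] unfolding g_def by (auto simp: comp_assoc)
  have ge: "g \<circ> e = g" using G_comp_e[OF g(1)] .
  have "g (f2 x) = x \<longleftrightarrow> e (f1 x) = e (f2 x)"
  proof
    assume "g (f2 x) = x"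
    then show "e (f1 x) = e (f2 x)" using g(2) by (metis comp_apply)
  next
    assume "e (f1 x) = e (f2 x)"
    then have "g (f2 x) = g (e (f1 x))" using ge by (metis comp_apply)
    then show "g (f2 x) = x" using g(3) assms(3) by (metis comp_apply)
  qed
  then show ?thesis
    unfolding stabG_def g_def[symmetric] using G_comp_L_in_G[OF g(1) assms(2)] by simp
qed

lemma Lzero_eq_if_separates:
  assumes "f1 \<in> L" and "f2 \<in> L" and "f1 y = f2 y" and "separates_idempotents L (f1 y)"
  shows "Lzero L f1 = Lzero L f2"
proof -
  have "Lzero L f1 (f1 y) = f1 y" "Lzero L f2 (f1 y) = f1 y"
    using Lzero_comp[OF assms(1)] Lzero_comp[OF assms(2)] assms(3) by (metis comp_apply)+
  then show ?thesis
    using inj_onD[OF assms(4)[unfolded separates_idempotents_def]] Lzero_in_L Lzero_idem assms(1,2)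
    by simp
qed

lemma eq_if_Lzero_eq:
  assumes "f1 \<in> L" and "f2 \<in> L" and "Lzero L f1 = Lzero L f2" and "e (f1 y) = e (f2 y)"
  shows "f1 y = f2 y"
proof -
  have "f y = Lzero L f (e (f y))" if "f \<in> L" for f
    using Lzero_comp[OF that] L_comp_e[OF Lzero_in_L[OF that]] by (metis comp_apply)
  then show ?thesis using assms by metis
qed

end

theorem mainTheorem7:
  fixes \<sigma> :: "'t::ab_group_add \<Rightarrow> 'x::t2_space \<Rightarrow> 'x"
    and \<pi> :: "'x \<Rightarrow> 'g::{topological_ab_group_add, t2_space}"
    and e f1 f2 :: "'x \<Rightarrow> 'x" and x :: 'x and \<xi> :: 'g
  assumes "compact (UNIV :: 'x set)"
    and "is_action \<sigma>" and "minimal_action \<sigma>" and "\<not> distal_action \<sigma>"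
    and "is_MEF \<sigma> \<pi>"
    and "e \<in> ellis \<sigma>" and "minimal_idempotent (ellis \<sigma>) e"
    and "x \<in> range e"
    and "f1 \<in> Lset (ellis \<sigma>) e" and "f2 \<in> Lset (ellis \<sigma>) e"
  shows "(regular_pt \<sigma> \<pi> \<xi> \<longrightarrow>
            ((f1, f2) \<in> Rev \<pi> (Lset (ellis \<sigma>) e) (\<xi> - \<pi> x) x \<longleftrightarrow>
               Ginv (ellis \<sigma>) e (e \<circ> f1) \<circ> f2 \<in> stabG (ellis \<sigma>) e x
               \<and> pi_tilde \<pi> f1 = \<xi> - \<pi> x \<and> pi_tilde \<pi> f2 = \<xi> - \<pi> x))
       \<and> ((\<forall>y. \<pi> y = \<xi> \<longrightarrow> separates_idempotents (Lset (ellis \<sigma>) e) y) \<longrightarrow>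
            ((f1, f2) \<in> Rev \<pi> (Lset (ellis \<sigma>) e) (\<xi> - \<pi> x) x \<longleftrightarrow>
               Ginv (ellis \<sigma>) e (e \<circ> f1) \<circ> f2 \<in> stabG (ellis \<sigma>) e x
               \<and> Lzero (Lset (ellis \<sigma>) e) f1 = Lzero (Lset (ellis \<sigma>) e) f2
               \<and> pi_tilde \<pi> f1 = \<xi> - \<pi> x \<and> pi_tilde \<pi> f2 = \<xi> - \<pi> x))"
proof -
  interpret minimal_idempotent_semigroup "ellis \<sigma>" e
    by unfold_locales (use ellis_comp_closed[OF assms(2)] assms(7) in auto)
  have stab: "Ginv (ellis \<sigma>) e (e \<circ> f1) \<circ> f2 \<in> stabG (ellis \<sigma>) e x \<longleftrightarrow> e (f1 x) = e (f2 x)"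
    using Ginv_comp_in_stabG_iff[OF assms(9,10) e_fixes_range[OF assms(8)]] .
  have fibre: "\<pi> (f x) = \<xi>" if "f \<in> L" "pi_tilde \<pi> f = \<xi> - \<pi> x" for f
    using pi_apply_ellis[OF assms(5) L_subset_E[OF that(1)]] that(2) by simp
  have e_fixes: "e (f x) = f x" if "regular_pt \<sigma> \<pi> \<xi>" "f \<in> L" "pi_tilde \<pi> f = \<xi> - \<pi> x" for f
    using idempotent_fixes_regular_fibre[OF assms(5) e_in_E e_idem] fibre that by metis
  have Lzero_eq: "Lzero L f1 = Lzero L f2"
    if "\<forall>y. \<pi> y = \<xi> \<longrightarrow> separates_idempotents L y" "f1 x = f2 x" "pi_tilde \<pi> f1 = \<xi> - \<pi> x"
    using Lzero_eq_if_separates[OF assms(9,10)] fibre[OF assms(9)] that by blast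
  show ?thesis
    unfolding Rev_def stab
    using assms(9,10) e_fixes Lzero_eq eq_if_Lzero_eq[OF assms(9,10)] by auto
qed

end
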